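(* Assume (A1)–(A2) and fix $K\ge1$. Let $v,w:[0,\infty)\times\mathbb{Z}\to\mathbb{R}$, $(t,i)\mapsto v_i(t),w_i(t)$, be continuously differentiable in $t$ and bounded on $[0,T]\times\mathbb{Z}$ for each $T>0$, such that $v$ is a subsolution and $w$ a supersolution of $$\frac{1}{\log K}\frac{d}{dt}n_i(t)=R(i\delta_K)n_i(t)+\sum_{l\in\mathbb{Z}}p((l+i)\delta_K)h_KG(lh_K)n_{l+i}(t),\quad t>0,\ i\in\mathbb{Z},$$ i.e. $v$ satisfies this with "$\le$" and $w$ with "$\ge$" in place of "$=$". If $v_i(0)\le w_i(0)$ for all $i$, then $v_i(t)\le w_i(t)$ for all $t\ge0$ and $i\in\mathbb{Z}$.
   Context: Let $R,p,G:\mathbb{R}\to\mathbb{R}$; $\delta_K>0$, $h_K:=\delta_K\log K$. (A1) $R,p$ Lipschitz with $\underline{R}\le R\le\overline{R}$, $0<\underline{p}\le p\le\overline{p}$. (A2) $G$ positive continuous, $\int G=1$, $G(x)=f(x)e^{-|x|}$ with $0<\min f\le f\le\sup f<\infty$. *)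

theory Defs
  imports "HOL-Analysis.Analysis"
begin

definition A1 :: "(real \<Rightarrow> real) \<Rightarrow> (real \<Rightarrow> real) \<Rightarrow> bool" where
  "A1 R p \<longleftrightarrow>
     (\<exists>L. L-lipschitz_on UNIV R) \<and> (\<exists>L. L-lipschitz_on UNIV p) \<and>
     (\<exists>Rlo Rhi. \<forall>x. Rlo \<le> R x \<and> R x \<le> Rhi) \<and>
     (\<exists>plo phi. 0 < plo \<and> (\<forall>x. plo \<le> p x \<and> p x \<le> phi))"

definition A2 :: "(real \<Rightarrow> real) \<Rightarrow> bool" where
  "A2 G \<longleftrightarrow>
     (\<forall>x. 0 < G x) \<and> continuous_on UNIV G \<and> (G has_integral 1) UNIV \<and>
     (\<exists>f c C. 0 < c \<and> (\<forall>x. c \<le> f x \<and> f x \<le> C \<and> G x = f x * exp (- \<bar>x\<bar>)))"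

definition hK :: "real \<Rightarrow> real \<Rightarrow> real" where
  "hK \<delta> K = \<delta> * ln K"

definition rhs :: "(real \<Rightarrow> real) \<Rightarrow> (real \<Rightarrow> real) \<Rightarrow> (real \<Rightarrow> real) \<Rightarrow> real \<Rightarrow> real
    \<Rightarrow> (int \<Rightarrow> real) \<Rightarrow> int \<Rightarrow> real" where
  "rhs R p G \<delta> K n i =
     R (of_int i * \<delta>) * n i +
     (\<Sum>\<^sub>\<infinity>l::int. p (of_int (l + i) * \<delta>) * hK \<delta> K * G (of_int l * hK \<delta> K) * n (l + i))"

end

theory Submission
  imports Defs
begin

text \<open>Let \<open>u = v - w\<close>. The coupling kernel is nonnegative and, because \<open>G\<close> decays
  exponentially, its row sums are bounded uniformly in \<open>i\<close>; hence \<open>u\<^sub>i' \<le> c\<^sub>i u\<^sub>i + B m\<close>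
  whenever \<open>m \<ge> 0\<close> bounds \<open>u\<close> from above, with \<open>c\<^sub>i\<close> bounded. On a short interval
  \<open>[t\<^sub>0, t\<^sub>0 + \<tau>]\<close> starting from \<open>u(t\<^sub>0) \<le> 0\<close>, an integrating factor turns any upper
  bound \<open>M\<close> for \<open>u\<close> into the bound \<open>M/2\<close>, so \<open>u \<le> 0\<close> there, and stepping forward by
  \<open>\<tau>\<close> covers \<open>[0, \<infinity>)\<close>. Iterating bounds avoids differentiating \<open>sup\<^sub>j u\<^sub>j\<close>, which
  need not be attained.\<close>

lemma summable_on_int_from_nat:
  fixes f :: "int \<Rightarrow> real"
  assumes "(\<lambda>n. f (int n)) summable_on UNIV" and "(\<lambda>n. f (- int n)) summable_on UNIV"
  shows "f summable_on UNIV"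
proof -
  have "f summable_on range int"
    using assms(1) by (subst summable_on_reindex) (auto simp: o_def)
  moreover have "f summable_on range (\<lambda>n. - int n)"
    using assms(2) by (subst summable_on_reindex) (auto simp: o_def inj_def)
  moreover have "range int \<union> range (\<lambda>n. - int n) = UNIV"
  proof -
    have "x \<in> range int \<union> range (\<lambda>n. - int n)" for x :: int
    proof (cases "0 \<le> x")
      case True
      then have "x = int (nat x)" by simp
      then show ?thesis by (metis UnI1 rangeI)
    next
      case False
      then have "x = - int (nat (- x))" by simp
      then show ?thesis by (metis UnI2 rangeI)
    qed
    then show ?thesis by blast
  qed
  ultimately show ?thesis
    by (metis summable_on_union)
qed

lemma summable_on_exp_abs_int:
  fixes h :: real
  assumes "0 < h"
  shows "(\<lambda>l::int. exp (- \<bar>real_of_int l\<bar> * h)) summable_on UNIV"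
proof (rule summable_on_int_from_nat)
  have geometric: "(\<lambda>n::nat. exp (- h) ^ n) summable_on UNIV"
    by (rule norm_summable_imp_summable_on) (simp add: summable_geometric assms)
  have "exp (- \<bar>real_of_int (int n)\<bar> * h) = exp (- h) ^ n"
    and "exp (- \<bar>real_of_int (- int n)\<bar> * h) = exp (- h) ^ n" for n
    by (simp_all add: exp_of_nat_mult[symmetric])
  with geometric show "(\<lambda>n. exp (- \<bar>real_of_int (int n)\<bar> * h)) summable_on UNIV"
    and "(\<lambda>n. exp (- \<bar>real_of_int (- int n)\<bar> * h)) summable_on UNIV"
    by simp_all
qed

lemma summable_on_dominated_mult_bounded:
  fixes a E b :: "'a \<Rightarrow> real"
  assumes "E summable_on A" and "\<And>x. x \<in> A \<Longrightarrow> 0 \<le> a x" and "\<And>x. x \<in> A \<Longrightarrow> a x \<le> E x"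
    and "\<And>x. x \<in> A \<Longrightarrow> \<bar>b x\<bar> \<le> B"
  shows "(\<lambda>x. a x * b x) summable_on A"
proof -
  have E_nonneg: "0 \<le> E x" if "x \<in> A" for x
    using assms(2,3) that by (meson order_trans)
  have "(\<lambda>x. E x * B) summable_on A"
    using assms(1) by (rule summable_on_cmult_left)
  then have "(\<lambda>x. \<bar>a x * b x\<bar>) summable_on A"
    by (rule summable_on_comparison_test)
      (use assms(2-4) E_nonneg in \<open>auto simp: abs_mult intro!: mult_mono\<close>)
  then show ?thesis
    using summable_on_iff_abs_summable_on_real by force
qed

lemma infsum_dominated_mult_le:
  fixes a E b :: "'a \<Rightarrow> real"
  assumes "E summable_on A" and "\<And>x. x \<in> A \<Longrightarrow> 0 \<le> a x" and "\<And>x. x \<in> A \<Longrightarrow> a x \<le> E x"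
    and "\<And>x. x \<in> A \<Longrightarrow> \<bar>b x\<bar> \<le> B" and "\<And>x. x \<in> A \<Longrightarrow> b x \<le> m" and "0 \<le> m"
  shows "(\<Sum>\<^sub>\<infinity>x\<in>A. a x * b x) \<le> infsum E A * m"
proof -
  have "(\<Sum>\<^sub>\<infinity>x\<in>A. a x * b x) \<le> (\<Sum>\<^sub>\<infinity>x\<in>A. E x * m)"
    by (rule infsum_mono[OF summable_on_dominated_mult_bounded[OF assms(1-4)]
          summable_on_cmult_left[OF assms(1)]])
      (use assms(2,3,5,6) in \<open>auto intro: mult_mono order_trans[OF mult_left_mono mult_right_mono]\<close>)
  also have "\<dots> = infsum E A * m"
    using assms(1) by (rule infsum_cmult_left)
  finally show ?thesis .
qed

definition coupling_kernel :: "(real \<Rightarrow> real) \<Rightarrow> (real \<Rightarrow> real) \<Rightarrow> real \<Rightarrow> real \<Rightarrow> int \<Rightarrow> int \<Rightarrow> real"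
  where "coupling_kernel p G \<delta> K i l = p (of_int (l + i) * \<delta>) * hK \<delta> K * G (of_int l * hK \<delta> K)"

lemma rhs_eq_coupling_kernel:
  "rhs R p G \<delta> K n i = R (of_int i * \<delta>) * n i + (\<Sum>\<^sub>\<infinity>l. coupling_kernel p G \<delta> K i l * n (l + i))"
  by (simp add: rhs_def coupling_kernel_def)

lemma coupling_kernel_dominated:
  assumes p_nonneg: "\<And>x. 0 \<le> p x" and p_le: "\<And>x. p x \<le> P"
    and G_nonneg: "\<And>x. 0 \<le> G x" and G_le: "\<And>x. G x \<le> C * exp (- \<bar>x\<bar>)"
    and "0 < \<delta>" and "1 \<le> K"
  obtains E where "E summable_on UNIV"
    and "\<And>i l. 0 \<le> coupling_kernel p G \<delta> K i l" and "\<And>i l. coupling_kernel p G \<delta> K i l \<le> E l"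
proof
  define h where "h = hK \<delta> K"
  have h_nonneg: "0 \<le> h"
    unfolding h_def hK_def using assms(5,6) by simp
  show "0 \<le> coupling_kernel p G \<delta> K i l" for i l
    unfolding coupling_kernel_def h_def[symmetric] using p_nonneg G_nonneg h_nonneg by simp
  show "coupling_kernel p G \<delta> K i l \<le> P * h * C * exp (- \<bar>real_of_int l\<bar> * h)" for i l
  proof -
    have "\<bar>real_of_int l * h\<bar> = \<bar>real_of_int l\<bar> * h"
      using h_nonneg by (simp add: abs_mult)
    then have "G (of_int l * h) \<le> C * exp (- \<bar>real_of_int l\<bar> * h)"
      using G_le[of "of_int l * h"] by simp
    then have "h * G (of_int l * h) \<le> h * (C * exp (- \<bar>real_of_int l\<bar> * h))"
      using h_nonneg by (rule mult_left_mono)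
    then show ?thesis
      unfolding coupling_kernel_def h_def[symmetric] mult.assoc
      using p_nonneg p_le G_nonneg h_nonneg by (intro mult_mono[of _ P]) (auto intro: order_trans)
  qed
  show "(\<lambda>l. P * h * C * exp (- \<bar>real_of_int l\<bar> * h)) summable_on UNIV"
  proof (cases "h = 0")
    \<comment> \<open>\<open>h = 0\<close> happens for \<open>K = 1\<close>; then the majorant vanishes.\<close>
    case False
    with h_nonneg show ?thesis
      by (intro summable_on_cmult_right summable_on_exp_abs_int) simp
  qed simp
qed

lemma rhs_diff_le:
  assumes "\<And>l. 0 \<le> coupling_kernel p G \<delta> K i l"
    and "\<And>l. coupling_kernel p G \<delta> K i l \<le> E l" and "E summable_on UNIV"
    and "\<And>j. \<bar>n\<^sub>1 j\<bar> \<le> B\<^sub>1" and "\<And>j. \<bar>n\<^sub>2 j\<bar> \<le> B\<^sub>2"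
    and "\<And>j. n\<^sub>1 j - n\<^sub>2 j \<le> m" and "0 \<le> m"
  shows "rhs R p G \<delta> K n\<^sub>1 i - rhs R p G \<delta> K n\<^sub>2 i
    \<le> R (of_int i * \<delta>) * (n\<^sub>1 i - n\<^sub>2 i) + infsum E UNIV * m"
proof -
  let ?a = "coupling_kernel p G \<delta> K i"
  have diff_bounded: "\<bar>n\<^sub>1 j - n\<^sub>2 j\<bar> \<le> B\<^sub>1 + B\<^sub>2" for j
    using assms(4,5)[of j] by linarith
  have "(\<lambda>l. ?a l * (n\<^sub>1 (l + i) - n\<^sub>2 (l + i))) summable_on UNIV"
    by (rule summable_on_dominated_mult_bounded) (use assms diff_bounded in auto)
  moreover have "(\<lambda>l. ?a l * n\<^sub>2 (l + i)) summable_on UNIV"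
    by (rule summable_on_dominated_mult_bounded) (use assms in auto)
  ultimately have "(\<Sum>\<^sub>\<infinity>l. ?a l * n\<^sub>1 (l + i))
      = (\<Sum>\<^sub>\<infinity>l. ?a l * (n\<^sub>1 (l + i) - n\<^sub>2 (l + i))) + (\<Sum>\<^sub>\<infinity>l. ?a l * n\<^sub>2 (l + i))"
    by (simp add: infsum_add[symmetric] algebra_simps)
  also have "\<dots> \<le> infsum E UNIV * m + (\<Sum>\<^sub>\<infinity>l. ?a l * n\<^sub>2 (l + i))"
    using infsum_dominated_mult_le[of E UNIV ?a "\<lambda>l. n\<^sub>1 (l + i) - n\<^sub>2 (l + i)" "B\<^sub>1 + B\<^sub>2" m]
      assms diff_bounded by simp
  finally show ?thesis
    unfolding rhs_eq_coupling_kernel by (simp add: algebra_simps)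
qed

lemma subsolution_minus_supersolution_le:
  assumes "\<And>l. 0 \<le> coupling_kernel p G \<delta> K i l"
    and "\<And>l. coupling_kernel p G \<delta> K i l \<le> E l" and "E summable_on UNIV"
    and "\<And>j. \<bar>n\<^sub>1 j\<bar> \<le> B\<^sub>1" and "\<And>j. \<bar>n\<^sub>2 j\<bar> \<le> B\<^sub>2"
    and "\<And>j. n\<^sub>1 j - n\<^sub>2 j \<le> m" and "0 \<le> m"
    and "0 \<le> L" and "d\<^sub>1 \<le> L * rhs R p G \<delta> K n\<^sub>1 i" and "L * rhs R p G \<delta> K n\<^sub>2 i \<le> d\<^sub>2"
  shows "d\<^sub>1 - d\<^sub>2 \<le> L * R (of_int i * \<delta>) * (n\<^sub>1 i - n\<^sub>2 i) + L * infsum E UNIV * m"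
proof -
  have "L * (rhs R p G \<delta> K n\<^sub>1 i - rhs R p G \<delta> K n\<^sub>2 i)
      \<le> L * (R (of_int i * \<delta>) * (n\<^sub>1 i - n\<^sub>2 i) + infsum E UNIV * m)"
    using rhs_diff_le[OF assms(1-7)] \<open>0 \<le> L\<close> by (rule mult_left_mono)
  with assms(9,10) show ?thesis
    by (simp add: algebra_simps)
qed

lemma linear_differential_inequality_bound:
  fixes y y' :: "real \<Rightarrow> real"
  assumes "t\<^sub>0 \<le> t" and cont: "continuous_on {t\<^sub>0..t} y"
    and deriv: "\<And>s. s \<in> {t\<^sub>0<..<t} \<Longrightarrow> (y has_real_derivative y' s) (at s)"
    and ineq: "\<And>s. s \<in> {t\<^sub>0<..<t} \<Longrightarrow> y' s \<le> c * y s + D"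
    and "y t\<^sub>0 \<le> 0" and "0 \<le> D"
  shows "y t \<le> exp (2 * \<bar>c\<bar> * (t - t\<^sub>0)) * D * (t - t\<^sub>0)"
proof -
  define D' where "D' = exp (\<bar>c\<bar> * (t - t\<^sub>0)) * D"
  define \<phi> where "\<phi> s = exp (- c * (s - t\<^sub>0)) * y s - D' * (s - t\<^sub>0)" for s
  have "\<phi> t \<le> \<phi> t\<^sub>0"
  proof (rule DERIV_nonpos_imp_decreasing_open[OF \<open>t\<^sub>0 \<le> t\<close>])
    show "continuous_on {t\<^sub>0..t} \<phi>"
      unfolding \<phi>_def by (intro continuous_intros cont)
  next
    fix s assume s: "t\<^sub>0 < s" "s < t"
    have "(\<phi> has_real_derivative exp (- c * (s - t\<^sub>0)) * (y' s - c * y s) - D') (at s)"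
      unfolding \<phi>_def using s by (auto intro!: derivative_eq_intros deriv simp: algebra_simps)
    moreover have "exp (- c * (s - t\<^sub>0)) * (y' s - c * y s) \<le> D'"
    proof -
      have "- c * (s - t\<^sub>0) \<le> \<bar>c\<bar> * (s - t\<^sub>0)"
        using s by (intro mult_right_mono) auto
      also have "\<dots> \<le> \<bar>c\<bar> * (t - t\<^sub>0)"
        using s by (intro mult_left_mono) auto
      finally have "exp (- c * (s - t\<^sub>0)) \<le> exp (\<bar>c\<bar> * (t - t\<^sub>0))"
        by simp
      then show ?thesis
        unfolding D'_def using ineq[of s] s \<open>0 \<le> D\<close>
        by (intro order_trans[OF mult_left_mono mult_right_mono]) auto
    qed
    ultimately show "\<exists>y. (\<phi> has_real_derivative y) (at s) \<and> y \<le> 0"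
      by auto
  qed
  then have "exp (- c * (t - t\<^sub>0)) * y t \<le> D' * (t - t\<^sub>0)"
    unfolding \<phi>_def using \<open>y t\<^sub>0 \<le> 0\<close> by simp
  moreover have "0 \<le> D' * (t - t\<^sub>0)"
    unfolding D'_def using \<open>0 \<le> D\<close> \<open>t\<^sub>0 \<le> t\<close> by simp
  moreover have "exp (c * (t - t\<^sub>0)) \<le> exp (\<bar>c\<bar> * (t - t\<^sub>0))"
    using \<open>t\<^sub>0 \<le> t\<close> by (simp add: mult_right_mono)
  ultimately have "exp (c * (t - t\<^sub>0)) * (exp (- c * (t - t\<^sub>0)) * y t)
      \<le> exp (\<bar>c\<bar> * (t - t\<^sub>0)) * (D' * (t - t\<^sub>0))"
    by (auto intro: order_trans[OF mult_left_mono mult_right_mono])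
  then show ?thesis
    unfolding D'_def by (simp add: mult.assoc[symmetric] exp_add[symmetric])
qed

lemma nonpos_if_bound_halves:
  fixes f :: "'a \<Rightarrow> real"
  assumes bounded: "\<forall>x\<in>S. f x \<le> M\<^sub>0"
    and halves: "\<And>M. 0 \<le> M \<Longrightarrow> \<forall>x\<in>S. f x \<le> M \<Longrightarrow> \<forall>x\<in>S. f x \<le> M / 2"
  shows "\<forall>x\<in>S. f x \<le> 0"
proof -
  have bound: "\<forall>x\<in>S. f x \<le> max M\<^sub>0 0 / 2 ^ n" for n
  proof (induction n)
    case 0
    then show ?case using bounded by auto
  next
    case (Suc n)
    then show ?case using halves[of "max M\<^sub>0 0 / 2 ^ n"] by (simp add: mult.commute)
  qed
  show ?thesis
  proof (intro ballI leI notI)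
    fix x assume "x \<in> S" and "0 < f x"
    obtain n where "max M\<^sub>0 0 / f x < 2 ^ n"
      using real_arch_pow[of 2] by fastforce
    with \<open>0 < f x\<close> have "max M\<^sub>0 0 / 2 ^ n < f x"
      by (simp add: field_simps)
    with bound \<open>x \<in> S\<close> show False
      by (meson not_le)
  qed
qed

lemma nonneg_real_induct_steps:
  fixes \<tau> t :: real
  assumes "0 < \<tau>" and "P 0" and step: "\<And>t\<^sub>0. 0 \<le> t\<^sub>0 \<Longrightarrow> P t\<^sub>0 \<Longrightarrow> \<forall>t\<in>{t\<^sub>0..t\<^sub>0 + \<tau>}. P t"
    and "0 \<le> t"
  shows "P t"
proof -
  have "\<forall>t\<in>{0..real k * \<tau>}. P t" for k :: nat
  proof (induction k)
    case 0
    then show ?case using \<open>P 0\<close> by simp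
  next
    case (Suc k)
    have "0 \<le> real k * \<tau>" using \<open>0 < \<tau>\<close> by simp
    with Suc have "\<forall>t\<in>{real k * \<tau>..real k * \<tau> + \<tau>}. P t"
      by (intro step) auto
    with Suc show ?case
      by (auto simp: algebra_simps)
  qed
  moreover obtain k :: nat where "t / \<tau> \<le> real k"
    using real_arch_simple by blast
  ultimately show ?thesis
    using \<open>0 < \<tau>\<close> \<open>0 \<le> t\<close> by (auto simp: field_simps)
qed

lemma exists_contraction_time:
  fixes \<Lambda> B :: real
  assumes "0 \<le> \<Lambda>" and "0 \<le> B"
  obtains \<tau> where "0 < \<tau>" and "exp (2 * \<Lambda> * \<tau>) * B * \<tau> \<le> 1 / 2"
proof
  define d where "d = exp (2 * \<Lambda>) * (B + 1)"
  define \<tau> where "\<tau> = 1 / (2 * d)"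
  have "1 * 1 \<le> d"
    unfolding d_def using assms by (intro mult_mono) auto
  then have "1 \<le> d"
    by simp
  then have "0 < \<tau>" and "\<tau> \<le> 1"
    unfolding \<tau>_def by simp_all
  then show "0 < \<tau>"
    by simp
  have "2 * \<Lambda> * \<tau> \<le> 2 * \<Lambda>"
    using assms(1) \<open>\<tau> \<le> 1\<close> by (simp add: mult_left_le)
  then have "exp (2 * \<Lambda> * \<tau>) * B * \<tau> \<le> d * \<tau>"
    unfolding d_def using assms \<open>0 < \<tau>\<close> by (intro mult_right_mono mult_mono) auto
  also have "\<dots> = 1 / 2"
    unfolding \<tau>_def using \<open>1 \<le> d\<close> by simp
  finally show "exp (2 * \<Lambda> * \<tau>) * B * \<tau> \<le> 1 / 2" .
qed

context
  fixes u u' :: "real \<Rightarrow> 'i \<Rightarrow> real" and c :: "'i \<Rightarrow> real" and \<Lambda> B :: real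
  assumes deriv: "\<And>t i. 0 \<le> t \<Longrightarrow> ((\<lambda>s. u s i) has_real_derivative u' t i) (at t within {0..})"
    and c_bounded: "\<And>i. \<bar>c i\<bar> \<le> \<Lambda>" and B_nonneg: "0 \<le> B"
    and ineq: "\<And>t i m. 0 < t \<Longrightarrow> 0 \<le> m \<Longrightarrow> \<forall>j. u t j \<le> m \<Longrightarrow> u' t i \<le> c i * u t i + B * m"
begin

lemma differential_inequality_interval_bound:
  assumes "0 \<le> t\<^sub>0" and start: "\<forall>j. u t\<^sub>0 j \<le> 0"
    and "0 \<le> M" and le_M: "\<forall>s\<in>{t\<^sub>0..t\<^sub>0 + \<tau>}. \<forall>j. u s j \<le> M"
    and r: "t\<^sub>0 \<le> r" "r \<le> t\<^sub>0 + \<tau>"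
  shows "u r i \<le> exp (2 * \<Lambda> * \<tau>) * B * \<tau> * M"
proof -
  have "u r i \<le> exp (2 * \<bar>c i\<bar> * (r - t\<^sub>0)) * (B * M) * (r - t\<^sub>0)"
  proof (rule linear_differential_inequality_bound)
    have "continuous_on {0..} (\<lambda>s. u s i)"
      using deriv by (rule DERIV_continuous_on) simp
    then show "continuous_on {t\<^sub>0..r} (\<lambda>s. u s i)"
      by (rule continuous_on_subset) (use \<open>0 \<le> t\<^sub>0\<close> in auto)
    show "((\<lambda>s. u s i) has_real_derivative u' s i) (at s)" if "s \<in> {t\<^sub>0<..<r}" for s
    proof -
      have "0 < s"
        using that \<open>0 \<le> t\<^sub>0\<close> by simp
      then have "at s within {0..} = at s"
        by (intro at_within_interior) auto
      with deriv[of s i] \<open>0 < s\<close> show ?thesis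
        by simp
    qed
    show "u' s i \<le> c i * u s i + B * M" if "s \<in> {t\<^sub>0<..<r}" for s
      using that \<open>0 \<le> t\<^sub>0\<close> r le_M \<open>0 \<le> M\<close> by (intro ineq) auto
  qed (use r start B_nonneg \<open>0 \<le> M\<close> in auto)
  also have "\<dots> \<le> exp (2 * \<Lambda> * \<tau>) * B * \<tau> * M"
  proof -
    have "\<bar>c i\<bar> * (r - t\<^sub>0) \<le> \<Lambda> * \<tau>"
      using c_bounded[of i] r by (intro mult_mono) auto
    then have "exp (2 * \<bar>c i\<bar> * (r - t\<^sub>0)) * (r - t\<^sub>0) \<le> exp (2 * \<Lambda> * \<tau>) * \<tau>"
      using r by (intro mult_mono) auto
    then have "exp (2 * \<bar>c i\<bar> * (r - t\<^sub>0)) * (r - t\<^sub>0) * (B * M) \<le> exp (2 * \<Lambda> * \<tau>) * \<tau> * (B * M)"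
      using B_nonneg \<open>0 \<le> M\<close> by (intro mult_right_mono) auto
    then show ?thesis
      by (simp add: algebra_simps)
  qed
  finally show ?thesis .
qed

lemma differential_inequality_nonpos:
  assumes bounded: "\<And>T. 0 < T \<Longrightarrow> \<exists>M. \<forall>t\<in>{0..T}. \<forall>i. u t i \<le> M"
    and init: "\<And>i. u 0 i \<le> 0" and "0 \<le> t"
  shows "u t i \<le> 0"
proof -
  have "0 \<le> \<Lambda>"
    using c_bounded[of i] by linarith
  then obtain \<tau> where "0 < \<tau>" and contraction: "exp (2 * \<Lambda> * \<tau>) * B * \<tau> \<le> 1 / 2"
    using exists_contraction_time B_nonneg by blast
  have step: "\<forall>t\<in>{t\<^sub>0..t\<^sub>0 + \<tau>}. \<forall>i. u t i \<le> 0"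
    if "0 \<le> t\<^sub>0" and start: "\<forall>i. u t\<^sub>0 i \<le> 0" for t\<^sub>0
  proof -
    let ?S = "{t\<^sub>0..t\<^sub>0 + \<tau>} \<times> (UNIV :: 'i set)"
    obtain M\<^sub>0 where "\<forall>t\<in>{0..t\<^sub>0 + \<tau>}. \<forall>i. u t i \<le> M\<^sub>0"
      using bounded[of "t\<^sub>0 + \<tau>"] \<open>0 \<le> t\<^sub>0\<close> \<open>0 < \<tau>\<close> by auto
    then have "\<forall>x\<in>?S. u (fst x) (snd x) \<le> M\<^sub>0"
      using \<open>0 \<le> t\<^sub>0\<close> by auto
    then have "\<forall>x\<in>?S. u (fst x) (snd x) \<le> 0"
    proof (rule nonpos_if_bound_halves)
      fix M :: real
      assume "0 \<le> M" and "\<forall>x\<in>?S. u (fst x) (snd x) \<le> M"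
      then have "u r j \<le> exp (2 * \<Lambda> * \<tau>) * B * \<tau> * M" if "r \<in> {t\<^sub>0..t\<^sub>0 + \<tau>}" for r j
        using that \<open>0 \<le> t\<^sub>0\<close> start by (intro differential_inequality_interval_bound) auto
      also have "\<dots> \<le> M / 2"
        using mult_right_mono[OF contraction \<open>0 \<le> M\<close>] by simp
      finally show "\<forall>x\<in>?S. u (fst x) (snd x) \<le> M / 2"
        by auto
    qed
    then show ?thesis
      by auto
  qed
  have "\<forall>i. u t i \<le> 0"
    by (rule nonneg_real_induct_steps[OF \<open>0 < \<tau>\<close> _ step \<open>0 \<le> t\<close>]) (use init in auto)
  then show ?thesis ..
qed

end

lemma A1_bounds:
  assumes "A1 R p"
  obtains \<Lambda> P where "\<And>x. \<bar>R x\<bar> \<le> \<Lambda>" and "\<And>x. 0 \<le> p x" and "\<And>x. p x \<le> P"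
proof -
  obtain R\<^sub>l R\<^sub>h p\<^sub>l P where "\<forall>x. R\<^sub>l \<le> R x \<and> R x \<le> R\<^sub>h" and "0 < p\<^sub>l" and "\<forall>x. p\<^sub>l \<le> p x \<and> p x \<le> P"
    using assms unfolding A1_def by blast
  then show ?thesis
    by (intro that[of "max \<bar>R\<^sub>l\<bar> \<bar>R\<^sub>h\<bar>" P]) (smt (verit))+
qed

lemma A2_bounds:
  assumes "A2 G"
  obtains C where "\<And>x. 0 \<le> G x" and "\<And>x. G x \<le> C * exp (- \<bar>x\<bar>)"
proof -
  obtain f C where "\<forall>x. f x \<le> C \<and> G x = f x * exp (- \<bar>x\<bar>)" and "\<forall>x. 0 < G x"
    using assms unfolding A2_def by blast
  then have "0 \<le> G x" and "G x \<le> C * exp (- \<bar>x\<bar>)" for x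
    by (simp_all add: less_imp_le mult_right_mono)
  then show ?thesis
    using that by blast
qed

lemma bounds_from_A1_A2:
  assumes "A1 R p" and "A2 G" and "0 < \<delta>" and "1 \<le> K"
  obtains \<Lambda> E where "\<And>x. \<bar>R x\<bar> \<le> \<Lambda>" and "E summable_on UNIV"
    and "\<And>i l. 0 \<le> coupling_kernel p G \<delta> K i l" and "\<And>i l. coupling_kernel p G \<delta> K i l \<le> E l"
proof -
  obtain \<Lambda> P where "\<And>x. \<bar>R x\<bar> \<le> \<Lambda>" and "\<And>x. 0 \<le> p x" and "\<And>x. p x \<le> P"
    using A1_bounds[OF assms(1)] by blast
  moreover obtain C where "\<And>x. 0 \<le> G x" and "\<And>x. G x \<le> C * exp (- \<bar>x\<bar>)"
    using A2_bounds[OF assms(2)] by blast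
  moreover obtain E where "E summable_on UNIV" and "\<And>i l. 0 \<le> coupling_kernel p G \<delta> K i l"
    and "\<And>i l. coupling_kernel p G \<delta> K i l \<le> E l"
    using coupling_kernel_dominated[of p P G C \<delta> K] calculation assms(3,4) by blast
  ultimately show ?thesis
    using that by blast
qed

theorem proposition3p3:
  fixes R p G :: "real \<Rightarrow> real" and \<delta> K :: real
    and v w v' w' :: "real \<Rightarrow> int \<Rightarrow> real"
  assumes A1: "A1 R p" and A2: "A2 G"
    and delta_pos: "0 < \<delta>" and K_ge: "1 \<le> K"
    and v_deriv: "\<And>i t. 0 \<le> t \<Longrightarrow> ((\<lambda>s. v s i) has_real_derivative v' t i) (at t within {0..})"
    and w_deriv: "\<And>i t. 0 \<le> t \<Longrightarrow> ((\<lambda>s. w s i) has_real_derivative w' t i) (at t within {0..})"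
    and v'_cont: "\<And>i. continuous_on {0..} (\<lambda>t. v' t i)"
    and w'_cont: "\<And>i. continuous_on {0..} (\<lambda>t. w' t i)"
    and v_bdd: "\<And>T. 0 < T \<Longrightarrow> \<exists>M. \<forall>t\<in>{0..T}. \<forall>i. \<bar>v t i\<bar> \<le> M"
    and w_bdd: "\<And>T. 0 < T \<Longrightarrow> \<exists>M. \<forall>t\<in>{0..T}. \<forall>i. \<bar>w t i\<bar> \<le> M"
    and v_sub: "\<And>t i. 0 < t \<Longrightarrow> v' t i \<le> ln K * rhs R p G \<delta> K (v t) i"
    and w_super: "\<And>t i. 0 < t \<Longrightarrow> w' t i \<ge> ln K * rhs R p G \<delta> K (w t) i"
    and init: "\<And>i. v 0 i \<le> w 0 i"
  shows "\<forall>t\<ge>0. \<forall>i. v t i \<le> w t i"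
proof (intro allI impI)
  fix t :: real and i :: int
  assume "0 \<le> t"
  obtain \<Lambda> E where R_bounded: "\<And>x. \<bar>R x\<bar> \<le> \<Lambda>" and E_summable: "E summable_on UNIV"
    and kernel_nonneg: "\<And>i l. 0 \<le> coupling_kernel p G \<delta> K i l"
    and kernel_le: "\<And>i l. coupling_kernel p G \<delta> K i l \<le> E l"
    using bounds_from_A1_A2[OF A1 A2 delta_pos K_ge] by blast
  have "0 \<le> ln K"
    using K_ge by simp
  have "v t i - w t i \<le> 0"
  proof (rule differential_inequality_nonpos[where u = "\<lambda>t i. v t i - w t i"
        and u' = "\<lambda>t i. v' t i - w' t i" and c = "\<lambda>i. ln K * R (of_int i * \<delta>)"
        and \<Lambda> = "ln K * \<Lambda>" and B = "ln K * infsum E UNIV"])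
    show "((\<lambda>s. v s i - w s i) has_real_derivative v' t i - w' t i) (at t within {0..})"
      if "0 \<le> t" for t i
      using that by (intro DERIV_diff v_deriv w_deriv)
    show "\<bar>ln K * R (of_int i * \<delta>)\<bar> \<le> ln K * \<Lambda>" for i
      using R_bounded \<open>0 \<le> ln K\<close> by (simp add: abs_mult mult_left_mono)
    have "0 \<le> infsum E UNIV"
      using kernel_nonneg kernel_le by (intro infsum_nonneg) (meson order_trans)
    with \<open>0 \<le> ln K\<close> show "0 \<le> ln K * infsum E UNIV"
      by simp
    show "\<exists>M. \<forall>t\<in>{0..T}. \<forall>i. v t i - w t i \<le> M" if "0 < T" for T :: real
    proof -
      obtain M\<^sub>v M\<^sub>w where M\<^sub>v: "\<forall>t\<in>{0..T}. \<forall>i. \<bar>v t i\<bar> \<le> M\<^sub>v"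
        and M\<^sub>w: "\<forall>t\<in>{0..T}. \<forall>i. \<bar>w t i\<bar> \<le> M\<^sub>w"
        using v_bdd[OF \<open>0 < T\<close>] w_bdd[OF \<open>0 < T\<close>] by blast
      have "v s j - w s j \<le> M\<^sub>v + M\<^sub>w" if "s \<in> {0..T}" for s j
        using M\<^sub>v M\<^sub>w that by (smt (verit, best))
      then show ?thesis
        by blast
    qed
    show "v' t i - w' t i \<le> ln K * R (of_int i * \<delta>) * (v t i - w t i) + ln K * infsum E UNIV * m"
      if "0 < t" and "0 \<le> m" and "\<forall>j. v t j - w t j \<le> m" for t i m
    proof -
      obtain B\<^sub>v B\<^sub>w where "\<forall>s\<in>{0..t}. \<forall>j. \<bar>v s j\<bar> \<le> B\<^sub>v" and "\<forall>s\<in>{0..t}. \<forall>j. \<bar>w s j\<bar> \<le> B\<^sub>w"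
        using v_bdd[OF \<open>0 < t\<close>] w_bdd[OF \<open>0 < t\<close>] by blast
      then have "\<bar>v t j\<bar> \<le> B\<^sub>v" and "\<bar>w t j\<bar> \<le> B\<^sub>w" for j
        using \<open>0 < t\<close> by auto
      then show ?thesis
        using that v_sub[OF \<open>0 < t\<close>, of i] w_super[OF \<open>0 < t\<close>, of i] \<open>0 \<le> ln K\<close>
        by (intro subsolution_minus_supersolution_le[OF kernel_nonneg kernel_le E_summable]) auto
    qed
  qed (use init \<open>0 \<le> t\<close> in auto)
  then show "v t i \<le> w t i"
    by simp
qed

end
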